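(* For every nonnegative integer $n$, \[ \sum_{k=0}^{2n}\frac{(-1)^k}{\binom{2n}{k}}H_{k}^2 =\frac{1+2n}{2+2n}\bigg\{H_{1+2n}^2-\frac{H_{1+2n}}{1+n} -H_{1+2n}^{\langle2\rangle}+H_{1+n}^{\langle2\rangle}\bigg\}. \]
   Context: For a nonnegative integer $m$, $H_m=\sum_{j=1}^m\frac1j$ and $H_m^{\langle2\rangle}=\sum_{j=1}^m\frac{1}{j^2}$ (both equal to $0$ when $m=0$). *)

theory Defs
  imports "HOL-Analysis.Analysis"
begin

text \<open>Second-order harmonic numbers: H2 m = sum of 1/j^2 for j = 1..m (0 for m = 0).
  First-order harmonic numbers are the library's harm.\<close>
definition harm2 :: "nat \<Rightarrow> real" where
  "harm2 m = (\<Sum>j=1..m. 1 / (real j)^2)"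

end

theory Submission
  imports Defs
begin

text \<open>Write \<open>A\<^sub>m(f) = \<Sum>\<^sub>k (-1)^k f(k) / binom(m,k)\<close>. Since
  \<open>1/binom(m+1,k) + 1/binom(m+1,k+1) = (m+2)/((m+1) binom(m,k))\<close>, the summands of \<open>A\<^sub>m(f)\<close> are
  proportional to \<open>f(k) (u\<^sub>k - u\<^sub>k\<^sub>+\<^sub>1)\<close> with \<open>u\<^sub>k = (-1)^k/binom(m+1,k)\<close>, and Abel summation
  reduces \<open>A\<^sub>m(f)\<close> to the differences \<open>f(k) - f(k-1)\<close>. For \<open>f = H^2\<close> these are
  \<open>(2H\<^sub>k - 1/k)/k\<close>, and \<open>k binom(m+1,k) = (m+1) binom(m,k-1)\<close> turns the result back into
  \<open>A\<^sub>m\<close>, now applied to \<open>2H\<^sub>j + 1/(j+1)\<close>. Abel summation once more evaluates \<open>A\<^sub>m(H)\<close> and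
  gives a recursion in \<open>m\<close> for \<open>A\<^sub>m(1/(j+1))\<close>, solved by
  \<open>(m+1) (harm2 (m+1) - harm2 \<lceil>m/2\<rceil>)\<close>.\<close>

definition alt_inv_binom_sum :: "nat \<Rightarrow> (nat \<Rightarrow> real) \<Rightarrow> real" where
  "alt_inv_binom_sum m f = (\<Sum>k=0..m. (-1)^k * f k / real (m choose k))"

lemma inverse_binomial_Suc_add:
  assumes "k \<le> m"
  shows "1 / real (Suc m choose k) + 1 / real (Suc m choose Suc k)
         = (real m + 2) / ((real m + 1) * real (m choose k))"
proof -
  have upper: "real (Suc k) * real (Suc m choose Suc k) = (real m + 1) * real (m choose k)"
    using Suc_times_binomial[of k m] by (metis of_nat_Suc of_nat_mult add.commute)
  have "real (Suc m - k) * real (Suc m choose k) = real (Suc m) * real (m choose k)"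
    using binomial_absorb_comp[of "Suc m" k] by (metis diff_Suc_1 of_nat_mult)
  then have lower: "(real m + 1 - real k) * real (Suc m choose k) = (real m + 1) * real (m choose k)"
    using assms by (simp add: of_nat_diff add.commute)
  have recip: "1 / x = a / c" if "a * x = c" "c \<noteq> 0" for a x c :: real
    using that by (auto simp: field_simps)
  have "(real m + 1) * real (m choose k) \<noteq> 0"
    using assms by simp
  then show ?thesis
    using recip[OF upper] recip[OF lower] by (simp add: add_divide_distrib[symmetric])
qed

lemma sum_mult_diff_by_parts:
  fixes f u :: "nat \<Rightarrow> 'a :: comm_ring_1"
  shows "(\<Sum>k=0..m. f k * (u k - u (Suc k)))
     = f 0 * u 0 - f m * u (Suc m) + (\<Sum>k=1..m. (f k - f (k - 1)) * u k)"
  by (induction m) (simp_all add: algebra_simps)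

lemma alt_inv_binom_sum_by_parts:
  "alt_inv_binom_sum m f = (real m + 1) / (real m + 2) *
     (f 0 + (-1)^m * f m + (\<Sum>k=1..m. (f k - f (k - 1)) * (-1)^k / real (Suc m choose k)))"
proof -
  define u where "u k = (-1::real)^k / real (Suc m choose k)" for k
  have "(-1)^k * f k / real (m choose k) = (real m + 1) / (real m + 2) * (f k * (u k - u (Suc k)))"
    if "k \<le> m" for k
  proof -
    have "u k - u (Suc k) = (-1)^k * (1 / real (Suc m choose k) + 1 / real (Suc m choose Suc k))"
      unfolding u_def by (simp add: field_simps del: binomial_Suc_Suc)
    also have "\<dots> = (-1)^k * (real m + 2) / ((real m + 1) * real (m choose k))"
      using inverse_binomial_Suc_add[OF that] by simp
    finally have diff:
      "u k - u (Suc k) = (-1)^k * (real m + 2) / ((real m + 1) * real (m choose k))" .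
    have "real (m choose k) \<noteq> 0"
      using that by simp
    then show ?thesis
      unfolding diff by (simp add: divide_simps)
  qed
  then have "alt_inv_binom_sum m f
      = (real m + 1) / (real m + 2) * (\<Sum>k=0..m. f k * (u k - u (Suc k)))"
    unfolding alt_inv_binom_sum_def by (simp add: sum_distrib_left)
  also have "\<dots> = (real m + 1) / (real m + 2) *
      (f 0 * u 0 - f m * u (Suc m) + (\<Sum>k=1..m. (f k - f (k - 1)) * u k))"
    by (simp only: sum_mult_diff_by_parts)
  finally show ?thesis
    by (simp add: u_def mult.assoc)
qed

lemma alt_inv_binom_sum_add_scale:
  "alt_inv_binom_sum m (\<lambda>k. c * f k + g k) = c * alt_inv_binom_sum m f + alt_inv_binom_sum m g"
  unfolding alt_inv_binom_sum_def
  by (simp add: sum.distrib sum_distrib_left add_divide_distrib algebra_simps)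

lemma sum_alt_div_times_binomial_Suc:
  "(\<Sum>k=1..Suc m. (-1)^k * g k / (real k * real (Suc m choose k)))
     = - alt_inv_binom_sum m (\<lambda>j. g (Suc j)) / (real m + 1)"
proof -
  have "(\<Sum>k=1..Suc m. (-1)^k * g k / (real k * real (Suc m choose k)))
      = (\<Sum>j=0..m. (-1)^Suc j * g (Suc j) / (real (Suc j) * real (Suc m choose Suc j)))"
    by (subst sum.shift_bounds_cl_Suc_ivl[symmetric]) simp
  also have "\<dots> = (\<Sum>j=0..m. - ((-1)^j * g (Suc j) / real (m choose j)) / (real m + 1))"
  proof (rule sum.cong[OF refl])
    fix j assume "j \<in> {0..m}"
    then have "real (m choose j) \<noteq> 0"
      by simp
    moreover have "real (Suc j) * real (Suc m choose Suc j) = (real m + 1) * real (m choose j)"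
      using Suc_times_binomial[of j m] by (metis of_nat_Suc of_nat_mult add.commute)
    ultimately show "(-1)^Suc j * g (Suc j) / (real (Suc j) * real (Suc m choose Suc j))
        = - ((-1)^j * g (Suc j) / real (m choose j)) / (real m + 1)"
      by (simp add: field_simps del: binomial_Suc_Suc of_nat_Suc)
  qed
  finally show ?thesis
    by (simp only: alt_inv_binom_sum_def sum_divide_distrib[symmetric] sum_negf)
qed

lemma sum_alt_inverse_times_binomial_Suc:
  "(\<Sum>k=1..m. (-1)^k / (real k * real (Suc m choose k)))
     = (-1)^m / (real m + 1) - (1 + (-1)^m) / (real m + 2)"
proof -
  have "alt_inv_binom_sum m (\<lambda>_. 1) = (real m + 1) / (real m + 2) * (1 + (-1)^m)"
    using alt_inv_binom_sum_by_parts[of m "\<lambda>_. 1"] by simp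
  then have "(\<Sum>k=1..Suc m. (-1)^k * 1 / (real k * real (Suc m choose k)))
      = - ((1 + (-1)^m) / (real m + 2))"
    unfolding sum_alt_div_times_binomial_Suc by (simp add: divide_simps)
  moreover have "(\<Sum>k=1..Suc m. (-1)^k * 1 / (real k * real (Suc m choose k)))
      = (\<Sum>k=1..m. (-1)^k / (real k * real (Suc m choose k))) - (-1)^m / (real m + 1)"
    by (simp add: add.commute)
  ultimately show ?thesis
    by linarith
qed

lemma harm_diff_pred:
  "k \<ge> 1 \<Longrightarrow> (harm k :: real) - harm (k - 1) = 1 / real k"
  by (cases k) (simp_all add: harm_Suc inverse_eq_divide)

lemma alt_inv_binom_sum_harm:
  "alt_inv_binom_sum m harm
     = (real m + 1) / (real m + 2) * ((-1)^m * harm (Suc m) - (1 + (-1)^m) / (real m + 2))"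
proof -
  have "(\<Sum>k=1..m. (harm k - harm (k - 1)) * (-1)^k / real (Suc m choose k))
      = (\<Sum>k=1..m. (-1)^k / (real k * real (Suc m choose k)))"
  proof (rule sum.cong[OF refl])
    fix k assume "k \<in> {1..m}"
    then show "(harm k - harm (k - 1)) * (-1)^k / real (Suc m choose k)
        = (-1)^k / (real k * real (Suc m choose k))"
      using harm_diff_pred[of k] by simp
  qed
  also have "\<dots> = (-1)^m / (real m + 1) - (1 + (-1)^m) / (real m + 2)"
    by (rule sum_alt_inverse_times_binomial_Suc)
  finally have sum: "(\<Sum>k=1..m. (harm k - harm (k - 1)) * (-1)^k / real (Suc m choose k))
      = (-1)^m / (real m + 1) - (1 + (-1)^m) / (real m + 2)" .
  show ?thesis
    unfolding alt_inv_binom_sum_by_parts[of m harm] sum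
    by (simp add: harm_expand harm_Suc inverse_eq_divide algebra_simps)
qed

lemma alt_inv_binom_sum_reciprocal_Suc:
  fixes m :: nat
  defines "f \<equiv> \<lambda>j. 1 / (real j + 1)"
  shows "alt_inv_binom_sum (Suc m) f / (real m + 2)
     = alt_inv_binom_sum m f / (real m + 1) - (1 + 2 * (-1)^m) / (real m + 2)^2"
proof -
  define Q where "Q = (\<Sum>k=1..m. (-1)^k / ((real k + 1) * real (Suc m choose k)))"
  define P where "P = (\<Sum>k=1..m. (-1)^k / (real k * real (Suc m choose k)))"
  have "alt_inv_binom_sum (Suc m) f = f 0 + (\<Sum>k=1..m. (-1)^k * f k / real (Suc m choose k))
      + (-1)^Suc m * f (Suc m) / real (Suc m choose Suc m)"
    unfolding alt_inv_binom_sum_def by (simp add: sum.atLeast_Suc_atMost del: binomial_Suc_Suc)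
  then have next_term: "alt_inv_binom_sum (Suc m) f = 1 + Q - (-1)^m / (real m + 2)"
    unfolding Q_def f_def by (simp add: add.commute)
  have "(\<Sum>k=1..m. (f k - f (k - 1)) * (-1)^k / real (Suc m choose k)) = Q - P"
    unfolding Q_def P_def sum_subtractf[symmetric]
    by (rule sum.cong[OF refl]) (auto simp: f_def of_nat_diff left_diff_distrib diff_divide_distrib)
  then have this_term:
    "alt_inv_binom_sum m f = (real m + 1) / (real m + 2) * (1 + (-1)^m / (real m + 1) + Q - P)"
    unfolding alt_inv_binom_sum_by_parts[of m f] by (simp add: f_def)
  have P: "P = (-1)^m / (real m + 1) - (1 + (-1)^m) / (real m + 2)"
    unfolding P_def by (rule sum_alt_inverse_times_binomial_Suc)
  show ?thesis
    unfolding next_term this_term P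
    by (simp add: divide_simps) (simp add: algebra_simps power2_eq_square)
qed

lemma harm2_Suc: "harm2 (Suc m) = harm2 m + 1 / (real m + 1)^2"
  unfolding harm2_def by (simp add: add.commute)

lemma harm2_half_Suc_diff:
  "harm2 (Suc (Suc m) div 2) - harm2 (Suc m div 2) = (2 + 2 * (-1)^m) / (real m + 2)^2"
proof (cases "even m")
  case True
  then obtain j where "m = 2 * j"
    by blast
  then show ?thesis
    by (simp add: harm2_Suc divide_simps) (simp add: algebra_simps power2_eq_square)
next
  case False
  then obtain j where "m = 2 * j + 1"
    using oddE by blast
  then show ?thesis
    by simp
qed

lemma alt_inv_binom_sum_reciprocal:
  "alt_inv_binom_sum m (\<lambda>j. 1 / (real j + 1))
     = (real m + 1) * (harm2 (Suc m) - harm2 (Suc m div 2))"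
proof (induction m)
  case 0
  then show ?case
    by (simp add: alt_inv_binom_sum_def harm2_def)
next
  case (Suc m)
  have "alt_inv_binom_sum (Suc m) (\<lambda>j. 1 / (real j + 1)) / (real m + 2)
      = harm2 (Suc m) - harm2 (Suc m div 2) - (1 + 2 * (-1)^m) / (real m + 2)^2"
    unfolding alt_inv_binom_sum_reciprocal_Suc Suc.IH by simp
  also have "\<dots> = harm2 (Suc (Suc m)) - harm2 (Suc (Suc m) div 2)"
    using harm2_half_Suc_diff[of m] harm2_Suc[of "Suc m"] by (simp add: field_simps)
  finally show ?case
    by (simp add: field_simps)
qed

lemma harm_sq_diff_pred:
  assumes "k \<ge> 1"
  shows "(harm k :: real)^2 - (harm (k - 1))^2 = (2 * harm k - 1 / real k) / real k"
proof -
  have pred: "harm (k - 1) = (harm k :: real) - 1 / real k"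
    using harm_diff_pred[OF assms] by simp
  show ?thesis
    unfolding pred by (simp add: power2_eq_square algebra_simps diff_divide_distrib)
qed

lemma alt_inv_binom_sum_harm_sq:
  "alt_inv_binom_sum m (\<lambda>k. (harm k)^2) = (real m + 1) / (real m + 2) *
     ((-1)^m * ((harm m)^2 + (2 * harm (Suc m) - 1 / (real m + 1)) / (real m + 1))
      - (2 * alt_inv_binom_sum m harm + alt_inv_binom_sum m (\<lambda>j. 1 / (real j + 1))) / (real m + 1))"
proof -
  define g where "g k = 2 * harm k - 1 / real k" for k
  have "(\<Sum>k=1..m. ((harm k)^2 - (harm (k - 1))^2) * (-1)^k / real (Suc m choose k))
      = (\<Sum>k=1..m. (-1)^k * g k / (real k * real (Suc m choose k)))"
  proof (rule sum.cong[OF refl])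
    fix k assume "k \<in> {1..m}"
    then show "((harm k)^2 - (harm (k - 1))^2) * (-1)^k / real (Suc m choose k)
        = (-1)^k * g k / (real k * real (Suc m choose k))"
      using harm_sq_diff_pred[of k] by (simp add: g_def)
  qed
  also have "\<dots> = (\<Sum>k=1..Suc m. (-1)^k * g k / (real k * real (Suc m choose k)))
      + (-1)^m * g (Suc m) / (real m + 1)"
    by (simp add: add.commute)
  also have "\<dots> = (-1)^m * g (Suc m) / (real m + 1)
      - alt_inv_binom_sum m (\<lambda>j. g (Suc j)) / (real m + 1)"
    unfolding sum_alt_div_times_binomial_Suc by simp
  also have "alt_inv_binom_sum m (\<lambda>j. g (Suc j))
      = 2 * alt_inv_binom_sum m harm + alt_inv_binom_sum m (\<lambda>j. 1 / (real j + 1))"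
  proof -
    have "(\<lambda>j. g (Suc j)) = (\<lambda>j. 2 * harm j + 1 / (real j + 1))"
      by (simp add: g_def harm_Suc inverse_eq_divide add.commute)
    then show ?thesis
      by (simp add: alt_inv_binom_sum_add_scale)
  qed
  finally have sum: "(\<Sum>k=1..m. ((harm k)^2 - (harm (k - 1))^2) * (-1)^k / real (Suc m choose k))
      = (-1)^m * g (Suc m) / (real m + 1)
        - (2 * alt_inv_binom_sum m harm + alt_inv_binom_sum m (\<lambda>j. 1 / (real j + 1))) / (real m + 1)" .
  show ?thesis
    unfolding alt_inv_binom_sum_by_parts[of m "\<lambda>k. (harm k)^2"] sum
    by (simp add: g_def harm_expand algebra_simps)
qed

theorem proposition1:
  fixes n :: nat
  shows "(\<Sum>k=0..2*n. (-1)^k / real (2*n choose k) * (harm k :: real)^2)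
    = (1 + 2 * real n) / (2 + 2 * real n) *
      ((harm (1 + 2*n) :: real)^2 - harm (1 + 2*n) / (1 + real n)
       - harm2 (1 + 2*n) + harm2 (1 + n))"
proof -
  have "(\<Sum>k=0..2*n. (-1)^k / real (2*n choose k) * (harm k :: real)^2)
      = alt_inv_binom_sum (2*n) (\<lambda>k. (harm k)^2)"
    unfolding alt_inv_binom_sum_def by (simp add: mult.commute)
  also have "\<dots> = (2 * real n + 1) / (2 * real n + 2) *
      ((harm (2*n))^2 + (2 * harm (Suc (2*n)) - 1 / (2 * real n + 1)) / (2 * real n + 1)
       - (2 * alt_inv_binom_sum (2*n) harm + alt_inv_binom_sum (2*n) (\<lambda>j. 1 / (real j + 1)))
         / (2 * real n + 1))"
    unfolding alt_inv_binom_sum_harm_sq by simp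
  also have "\<dots> = (1 + 2 * real n) / (2 + 2 * real n) *
      ((harm (1 + 2*n))^2 - harm (1 + 2*n) / (1 + real n) - harm2 (1 + 2*n) + harm2 (1 + n))"
    unfolding alt_inv_binom_sum_harm alt_inv_binom_sum_reciprocal
    by (simp add: harm_Suc harm2_Suc inverse_eq_divide divide_simps)
      (simp add: algebra_simps power2_eq_square)
  finally show ?thesis .
qed

end
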